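(* Let $\vec e=(e_1,e_2,e_3)\in\mathbb{R}^3$ be a unit vector. For every $k\ge1$, the number of non-trivial compositions of order $k$ of operations from $\{\nabla_0,\nabla_1,\nabla_2,\nabla_3\}=\{\mathrm{dir}_{\vec e},\mathrm{grad},\mathrm{curl},\mathrm{div}\}$ in $\mathbb{R}^3$ equals $F_{k+3}+1$, where $F_j$ is the $j$-th Fibonacci number ($F_1=F_2=1$, $F_j=F_{j-1}+F_{j-2}$).
   Context: Let $\mathrm{A}_0=C^\infty(\mathbb{R}^3,\mathbb{R})$ and $\mathrm{A}_1$ the set of maps $\vec f=(f_1,f_2,f_3):\mathbb{R}^3\to\mathbb{R}^3$ with $f_1,f_2,f_3\in C^\infty(\mathbb{R}^3)$. Operators: $\nabla_1=\mathrm{grad}:\mathrm{A}_0\to\mathrm{A}_1$, $\nabla_1 f=(\partial_1 f,\partial_2 f,\partial_3 f)$; $\nabla_2=\mathrm{curl}:\mathrm{A}_1\to\mathrm{A}_1$, $\nabla_2\vec f=(\partial_2f_3-\partial_3f_2,\ \partial_3f_1-\partial_1f_3,\ \partial_1f_2-\partial_2f_1)$; $\nabla_3=\mathrm{div}:\mathrm{A}_1\to\mathrm{A}_0$, $\nabla_3\vec f=\partial_1f_1+\partial_2f_2+\partial_3f_3$; $\nabla_0=\mathrm{dir}_{\vec e}:\mathrm{A}_0\to\mathrm{A}_0$, $\nabla_0f=\nabla_1f\cdot\vec e$ (Gateaux directional derivative). A composition of order $k$ is $\nabla_{i_k}\circ\cdots\circ\nabla_{i_1}$ with $i_j\in\{0,1,2,3\}$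 such that the codomain of each factor equals the domain of the next; it is non-trivial if it is not identically $0$ (resp. $\vec 0$). *)

theory Defs
  imports "HOL-Analysis.Analysis" "HOL-Number_Theory.Fib"
begin

definition pd :: "3 \<Rightarrow> (real^3 \<Rightarrow> real) \<Rightarrow> (real^3 \<Rightarrow> real)" where
  "pd i f = (\<lambda>x. frechet_derivative f (at x) (axis i 1))"

text \<open>C-infinity: all iterated partial derivatives (including f itself) exist and
  are differentiable everywhere.\<close>
definition smooth :: "(real^3 \<Rightarrow> real) \<Rightarrow> bool" where
  "smooth f \<longleftrightarrow> (\<forall>is x. (foldr pd is f) differentiable (at x))"

datatype fld = Sc "real^3 \<Rightarrow> real" | Ve "real^3 \<Rightarrow> real^3"

fun in_A :: "fld \<Rightarrow> bool" where
  "in_A (Sc f) = smooth f"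
| "in_A (Ve F) = (\<forall>j. smooth (\<lambda>x. F x $ j))"

fun is_vec :: "fld \<Rightarrow> bool" where
  "is_vec (Sc f) = False"
| "is_vec (Ve F) = True"

fun nonzero :: "fld \<Rightarrow> bool" where
  "nonzero (Sc f) = (\<exists>x. f x \<noteq> 0)"
| "nonzero (Ve F) = (\<exists>x. F x \<noteq> 0)"

definition grad :: "(real^3 \<Rightarrow> real) \<Rightarrow> real^3 \<Rightarrow> real^3" where
  "grad f x = (\<chi> i. pd i f x)"

definition curl :: "(real^3 \<Rightarrow> real^3) \<Rightarrow> real^3 \<Rightarrow> real^3" where
  "curl F x = vector [pd 2 (\<lambda>y. F y $ 3) x - pd 3 (\<lambda>y. F y $ 2) x,
                      pd 3 (\<lambda>y. F y $ 1) x - pd 1 (\<lambda>y. F y $ 3) x,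
                      pd 1 (\<lambda>y. F y $ 2) x - pd 2 (\<lambda>y. F y $ 1) x]"

definition dvg :: "(real^3 \<Rightarrow> real^3) \<Rightarrow> real^3 \<Rightarrow> real" where
  "dvg F x = pd 1 (\<lambda>y. F y $ 1) x + pd 2 (\<lambda>y. F y $ 2) x + pd 3 (\<lambda>y. F y $ 3) x"

text \<open>Operators nabla_0 = dir_e, nabla_1 = grad, nabla_2 = curl, nabla_3 = div
  (only meaningful on their domains; other cases are junk and never used).\<close>
fun nabla :: "real^3 \<Rightarrow> nat \<Rightarrow> fld \<Rightarrow> fld" where
  "nabla e 0 (Sc f) = Sc (\<lambda>x. grad f x \<bullet> e)"
| "nabla e (Suc 0) (Sc f) = Ve (grad f)"
| "nabla e (Suc (Suc 0)) (Ve F) = Ve (curl F)"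
| "nabla e (Suc (Suc (Suc 0))) (Ve F) = Sc (dvg F)"
| "nabla e _ g = g"

text \<open>Domain / codomain of nabla_i: True = A_1 (vector fields), False = A_0.\<close>
definition dom_vec :: "nat \<Rightarrow> bool" where "dom_vec i \<longleftrightarrow> i = 2 \<or> i = 3"
definition cod_vec :: "nat \<Rightarrow> bool" where "cod_vec i \<longleftrightarrow> i = 1 \<or> i = 2"

text \<open>A composition of order k is a list [i_1,...,i_k], representing
  nabla_{i_k} o ... o nabla_{i_1}.\<close>
definition admissible :: "nat list \<Rightarrow> bool" where
  "admissible is \<longleftrightarrow> set is \<subseteq> {0..3} \<and>
     (\<forall>j. Suc j < length is \<longrightarrow> cod_vec (is ! j) = dom_vec (is ! Suc j))"

definition compose :: "real^3 \<Rightarrow> nat list \<Rightarrow> fld \<Rightarrow> fld" where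
  "compose e is g = foldl (\<lambda>h i. nabla e i h) g is"

definition nontrivial :: "real^3 \<Rightarrow> nat list \<Rightarrow> bool" where
  "nontrivial e is \<longleftrightarrow>
     (\<exists>g. in_A g \<and> is_vec g = dom_vec (hd is) \<and> nonzero (compose e is g))"

end

theory Submission
  imports Defs
begin

text \<open>
  Such a word is trivial as soon as it contains the factor 1,2 (curl of a gradient)
  or 2,3 (divergence of a curl): these vanish on smooth fields by the symmetry of second
  derivatives, and all operators map zero to zero. Every other admissible word is nontrivial,
  as plane waves exp (e \<bullet> x) show: on them dir_e, grad, curl and div act as multiplication by
  e \<bullet> e = 1, by e, by the cross product with e and by the inner product with e. The remaining
  words are the walks in the graph 0,3 \<rightarrow> 0,1, 1 \<rightarrow> 3, 2 \<rightarrow> 2, and their numbers obey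
  the Fibonacci recursion.
\<close>

lemma has_real_derivative_along_line:
  fixes f :: "'a::real_normed_vector \<Rightarrow> real"
  assumes "f differentiable (at (y + t *\<^sub>R u))"
  shows "((\<lambda>t. f (y + t *\<^sub>R u)) has_real_derivative frechet_derivative f (at (y + t *\<^sub>R u)) u) (at t)"
proof -
  let ?D = "frechet_derivative f (at (y + t *\<^sub>R u))"
  have D: "(f has_derivative ?D) (at (y + t *\<^sub>R u))"
    using assms frechet_derivative_works by blast
  have "((\<lambda>t. y + t *\<^sub>R u) has_derivative (\<lambda>s. s *\<^sub>R u)) (at t)"
    by (auto intro!: derivative_eq_intros)
  from has_derivative_compose[OF this D]
  have "((\<lambda>t. f (y + t *\<^sub>R u)) has_derivative (\<lambda>s. ?D u * s)) (at t)"
    using linear_scale[OF has_derivative_linear[OF D]] by (simp add: o_def mult.commute)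
  then show ?thesis
    by (simp add: has_field_derivative_def)
qed

lemma second_difference_mean_value:
  fixes f :: "'a::real_normed_vector \<Rightarrow> real"
  assumes "\<And>y. f differentiable (at y)" and "0 < h"
  obtains z where "0 < z" "z < h"
    "f (x + h *\<^sub>R u + h *\<^sub>R v) - f (x + h *\<^sub>R u) - f (x + h *\<^sub>R v) + f x
       = h * (frechet_derivative f (at (x + (h *\<^sub>R v + z *\<^sub>R u))) u
              - frechet_derivative f (at (x + z *\<^sub>R u)) u)"
proof -
  define g where "g t = f ((x + h *\<^sub>R v) + t *\<^sub>R u) - f (x + t *\<^sub>R u)" for t
  define g' where "g' t = frechet_derivative f (at (x + h *\<^sub>R v + t *\<^sub>R u)) u
                     - frechet_derivative f (at (x + t *\<^sub>R u)) u" for t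
  have "DERIV g t :> g' t" for t
    unfolding g_def g'_def by (intro DERIV_diff has_real_derivative_along_line assms(1))
  then obtain z where "0 < z" "z < h" and "g h - g 0 = (h - 0) * g' z"
    using MVT2[of 0 h g g'] assms(2) by blast
  moreover have "g h - g 0 = f (x + h *\<^sub>R u + h *\<^sub>R v) - f (x + h *\<^sub>R u) - f (x + h *\<^sub>R v) + f x"
    unfolding g_def by (simp add: algebra_simps)
  ultimately show ?thesis using that unfolding g'_def by (simp add: add.assoc)
qed

lemma second_difference_estimate:
  fixes f :: "'a::real_normed_vector \<Rightarrow> real" and u :: 'a
  defines "\<phi> \<equiv> \<lambda>y. frechet_derivative f (at y) u"
  assumes df: "\<And>y. f differentiable (at y)" and L: "linear L"
    and d: "\<And>w. norm w < d \<Longrightarrow> \<bar>\<phi> (x + w) - \<phi> x - L w\<bar> \<le> \<epsilon> * norm w"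
    and "0 < h" and hd: "h * (norm u + norm v) < d" and "0 \<le> \<epsilon>"
  shows "\<bar>f (x + h *\<^sub>R u + h *\<^sub>R v) - f (x + h *\<^sub>R u) - f (x + h *\<^sub>R v) + f x - h\<^sup>2 * L v\<bar>
     \<le> \<epsilon> * h\<^sup>2 * (2 * norm u + norm v)"
proof -
  obtain z where "0 < z" "z < h" and mvt:
    "f (x + h *\<^sub>R u + h *\<^sub>R v) - f (x + h *\<^sub>R u) - f (x + h *\<^sub>R v) + f x
       = h * (\<phi> (x + (h *\<^sub>R v + z *\<^sub>R u)) - \<phi> (x + z *\<^sub>R u))"
    using second_difference_mean_value[OF df \<open>0 < h\<close>] unfolding \<phi>_def by blast
  define w1 where "w1 = h *\<^sub>R v + z *\<^sub>R u"
  define w2 where "w2 = z *\<^sub>R u"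
  have "z * norm u \<le> h * norm u"
    using \<open>z < h\<close> by (simp add: mult_right_mono)
  moreover have nw1: "norm w1 \<le> h * norm v + z * norm u"
    unfolding w1_def using \<open>0 < z\<close> \<open>0 < h\<close> by (smt (verit) norm_scaleR norm_triangle_ineq)
  moreover have nw2: "norm w2 = z * norm u"
    unfolding w2_def using \<open>0 < z\<close> by simp
  ultimately have "norm w1 < d" "norm w2 < d"
    using hd by (simp_all add: distrib_left) (smt (verit) \<open>0 < h\<close> mult_nonneg_nonneg norm_ge_zero)
  moreover have "L w1 - L w2 = h * L v"
    unfolding w1_def w2_def by (simp add: linear_add[OF L] linear_scale[OF L])
  ultimately have "\<bar>\<phi> (x + w1) - \<phi> (x + w2) - h * L v\<bar> \<le> \<epsilon> * (norm w1 + norm w2)"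
    using d[of w1] d[of w2] by (simp add: abs_le_iff algebra_simps; linarith)
  also have "\<dots> \<le> \<epsilon> * (h * norm v + z * norm u + z * norm u)"
    using nw1 nw2 \<open>0 \<le> \<epsilon>\<close> by (intro mult_left_mono) auto
  also have "\<dots> \<le> \<epsilon> * (h * (2 * norm u + norm v))"
    using \<open>z * norm u \<le> h * norm u\<close> \<open>0 \<le> \<epsilon>\<close>
    by (intro mult_left_mono) (auto simp: algebra_simps)
  finally have "h * \<bar>\<phi> (x + w1) - \<phi> (x + w2) - h * L v\<bar>
      \<le> h * (\<epsilon> * (h * (2 * norm u + norm v)))"
    using \<open>0 < h\<close> by (simp add: mult_left_mono)
  moreover have "f (x + h *\<^sub>R u + h *\<^sub>R v) - f (x + h *\<^sub>R u) - f (x + h *\<^sub>R v) + f x - h\<^sup>2 * L v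
      = h * (\<phi> (x + w1) - \<phi> (x + w2) - h * L v)"
    unfolding mvt w1_def w2_def by (simp add: power2_eq_square algebra_simps)
  ultimately show ?thesis
    using \<open>0 < h\<close> by (simp add: abs_mult power2_eq_square mult_ac)
qed

lemma second_difference_approx:
  fixes f :: "'a::real_normed_vector \<Rightarrow> real"
  assumes df: "\<And>y. f differentiable (at y)"
    and du: "(\<lambda>y. frechet_derivative f (at y) u) differentiable (at x)"
    and "\<epsilon> > 0"
  shows "\<exists>\<delta>>0. \<forall>h. 0 < h \<and> h < \<delta> \<longrightarrow>
    \<bar>f (x + h *\<^sub>R u + h *\<^sub>R v) - f (x + h *\<^sub>R u) - f (x + h *\<^sub>R v) + f x
      - h\<^sup>2 * frechet_derivative (\<lambda>y. frechet_derivative f (at y) u) (at x) v\<bar>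
     \<le> \<epsilon> * h\<^sup>2 * (2 * norm u + norm v)"
proof -
  define \<phi> where "\<phi> y = frechet_derivative f (at y) u" for y
  define L where "L = frechet_derivative \<phi> (at x)"
  have "(\<phi> has_derivative L) (at x)"
    using du frechet_derivative_works unfolding \<phi>_def L_def by blast
  then have L: "linear L" and
    "\<forall>e>0. \<exists>d>0. \<forall>y. norm (y - x) < d \<longrightarrow> norm (\<phi> y - \<phi> x - L (y - x)) \<le> e * norm (y - x)"
    unfolding has_derivative_at_alt by (auto simp: bounded_linear.linear)
  then obtain d where "d > 0"
    and d: "\<And>w. norm w < d \<Longrightarrow> \<bar>\<phi> (x + w) - \<phi> x - L w\<bar> \<le> \<epsilon> * norm w"
    using \<open>\<epsilon> > 0\<close> by (metis real_norm_def add_diff_cancel_left')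
  define \<delta> where "\<delta> = d / (norm u + norm v + 1)"
  have "norm u + norm v + 1 > 0"
    by (simp add: add_nonneg_pos)
  then have "\<delta> > 0"
    unfolding \<delta>_def using \<open>d > 0\<close> by simp
  moreover have "h * (norm u + norm v) < d" if "0 < h" "h < \<delta>" for h
  proof -
    have "h * (norm u + norm v) < \<delta> * (norm u + norm v + 1)"
      using that by (intro mult_strict_mono') auto
    then show ?thesis
      unfolding \<delta>_def using \<open>norm u + norm v + 1 > 0\<close> by simp
  qed
  ultimately show ?thesis
    using second_difference_estimate[OF df L d[unfolded \<phi>_def]] \<open>\<epsilon> > 0\<close>
    unfolding L_def \<phi>_def by (meson less_imp_le)
qed

lemma frechet_derivative_second_commute:
  fixes f :: "'a::real_normed_vector \<Rightarrow> real"
  assumes df: "\<And>y. f differentiable (at y)"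
    and du: "(\<lambda>y. frechet_derivative f (at y) u) differentiable (at x)"
    and dv: "(\<lambda>y. frechet_derivative f (at y) v) differentiable (at x)"
  shows "frechet_derivative (\<lambda>y. frechet_derivative f (at y) u) (at x) v
       = frechet_derivative (\<lambda>y. frechet_derivative f (at y) v) (at x) u"
    (is "?A = ?B")
proof -
  define C where "C = 3 * (norm u + norm v) + 1"
  have "C > 0" unfolding C_def by (simp add: add_nonneg_pos)
  have bound: "\<bar>?A - ?B\<bar> \<le> \<epsilon> * C" if "\<epsilon> > 0" for \<epsilon>
  proof -
    obtain d1 where "d1 > 0" and d1: "\<And>h. 0 < h \<and> h < d1 \<Longrightarrow>
      \<bar>f (x + h *\<^sub>R u + h *\<^sub>R v) - f (x + h *\<^sub>R u) - f (x + h *\<^sub>R v) + f x - h\<^sup>2 * ?A\<bar>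
       \<le> \<epsilon> * h\<^sup>2 * (2 * norm u + norm v)"
      using second_difference_approx[OF df du \<open>\<epsilon> > 0\<close>, of v] by blast
    obtain d2 where "d2 > 0" and d2: "\<And>h. 0 < h \<and> h < d2 \<Longrightarrow>
      \<bar>f (x + h *\<^sub>R v + h *\<^sub>R u) - f (x + h *\<^sub>R v) - f (x + h *\<^sub>R u) + f x - h\<^sup>2 * ?B\<bar>
       \<le> \<epsilon> * h\<^sup>2 * (2 * norm v + norm u)"
      using second_difference_approx[OF df dv \<open>\<epsilon> > 0\<close>, of u] by blast
    define h where "h = min d1 d2 / 2"
    have h: "0 < h \<and> h < d1" "0 < h \<and> h < d2"
      unfolding h_def using \<open>d1 > 0\<close> \<open>d2 > 0\<close> by auto
    define D where "D = f (x + h *\<^sub>R u + h *\<^sub>R v) - f (x + h *\<^sub>R u) - f (x + h *\<^sub>R v) + f x"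
    have "x + h *\<^sub>R v + h *\<^sub>R u = x + h *\<^sub>R u + h *\<^sub>R v"
      by (simp add: algebra_simps)
    then have "\<bar>D - h\<^sup>2 * ?A\<bar> \<le> \<epsilon> * h\<^sup>2 * (2 * norm u + norm v)"
      and "\<bar>D - h\<^sup>2 * ?B\<bar> \<le> \<epsilon> * h\<^sup>2 * (2 * norm v + norm u)"
      using d1[OF h(1)] d2[OF h(2)] unfolding D_def by (auto simp: algebra_simps)
    moreover have "h\<^sup>2 * \<bar>?A - ?B\<bar> = \<bar>(D - h\<^sup>2 * ?B) - (D - h\<^sup>2 * ?A)\<bar>"
    proof -
      have "(D - h\<^sup>2 * ?B) - (D - h\<^sup>2 * ?A) = h\<^sup>2 * (?A - ?B)"
        by (simp add: algebra_simps)
      then show ?thesis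
        by (simp add: abs_mult)
    qed
    ultimately have "h\<^sup>2 * \<bar>?A - ?B\<bar>
        \<le> \<epsilon> * h\<^sup>2 * (2 * norm u + norm v) + \<epsilon> * h\<^sup>2 * (2 * norm v + norm u)"
      by linarith
    also have "\<dots> \<le> h\<^sup>2 * (\<epsilon> * C)"
      unfolding C_def using \<open>\<epsilon> > 0\<close> by (simp add: algebra_simps)
    finally show ?thesis
      using h by simp
  qed
  have "\<bar>?A - ?B\<bar> \<le> 0"
  proof (rule field_le_epsilon)
    fix \<epsilon> :: real
    assume "\<epsilon> > 0"
    then show "\<bar>?A - ?B\<bar> \<le> 0 + \<epsilon>"
      using bound[of "\<epsilon> / C"] \<open>C > 0\<close> by simp
  qed
  then show ?thesis
    by simp
qed

lemma smooth_differentiable: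
  assumes "smooth f"
  shows "f differentiable (at x)"
  using assms[unfolded smooth_def, rule_format, of "[]"] by simp

lemma smooth_pd:
  assumes "smooth f"
  shows "smooth (pd i f)"
  unfolding smooth_def
proof (intro allI)
  fix "is" x
  show "foldr pd is (pd i f) differentiable (at x)"
    using assms[unfolded smooth_def, rule_format, of "is @ [i]"] by simp
qed

lemma pd_commute:
  assumes "smooth f"
  shows "pd i (pd j f) = pd j (pd i f)"
  using frechet_derivative_second_commute[OF smooth_differentiable[OF assms]]
    smooth_differentiable[OF smooth_pd[OF assms]]
  unfolding pd_def by auto

lemma pd_linear_combination:
  assumes "\<And>x. f differentiable (at x)" and "\<And>x. g differentiable (at x)"
  shows "pd i (\<lambda>x. a * f x + b * g x) = (\<lambda>x. a * pd i f x + b * pd i g x)"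
proof
  fix x
  have "(f has_derivative frechet_derivative f (at x)) (at x)"
    and "(g has_derivative frechet_derivative g (at x)) (at x)"
    using assms frechet_derivative_works by blast+
  then have "((\<lambda>x. a * f x + b * g x) has_derivative
        (\<lambda>h. a * frechet_derivative f (at x) h + b * frechet_derivative g (at x) h)) (at x)"
    by (intro has_derivative_add has_derivative_mult_right)
  then show "pd i (\<lambda>x. a * f x + b * g x) x = a * pd i f x + b * pd i g x"
    unfolding pd_def by (simp add: frechet_derivative_at[symmetric])
qed

lemma smooth_linear_combination:
  assumes "smooth f" and "smooth g"
  shows "smooth (\<lambda>x. a * f x + b * g x)"
proof -
  have "foldr pd is (\<lambda>x. a * f x + b * g x) = (\<lambda>x. a * foldr pd is f x + b * foldr pd is g x)"
    for "is"
  proof (induction "is")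
    case (Cons i "is")
    then show ?case
      using assms by (simp add: smooth_def pd_linear_combination)
  qed simp
  then show ?thesis
    using assms unfolding smooth_def by (auto intro!: differentiable_add differentiable_mult)
qed

lemma smooth_add: "smooth f \<Longrightarrow> smooth g \<Longrightarrow> smooth (\<lambda>x. f x + g x)"
  using smooth_linear_combination[of f g 1 1] by simp

lemma smooth_diff: "smooth f \<Longrightarrow> smooth g \<Longrightarrow> smooth (\<lambda>x. f x - g x)"
  using smooth_linear_combination[of f g 1 "-1"] by simp

lemma smooth_cmult: "smooth f \<Longrightarrow> smooth (\<lambda>x. c * f x)"
  using smooth_linear_combination[of f f c 0] by simp

lemma pd_diff:
  assumes "smooth f" and "smooth g"
  shows "pd i (\<lambda>x. f x - g x) = (\<lambda>x. pd i f x - pd i g x)"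
  using pd_linear_combination[of f g i 1 "-1"] assms smooth_differentiable by simp

lemma pd_const_zero: "pd i (\<lambda>x. 0) = (\<lambda>x. 0)"
  unfolding pd_def by simp

lemma grad_component: "(\<lambda>x. grad f x $ i) = pd i f"
  by (simp add: grad_def)

lemma curl_components:
  "(\<lambda>x. curl F x $ 1) = (\<lambda>x. pd 2 (\<lambda>y. F y $ 3) x - pd 3 (\<lambda>y. F y $ 2) x)"
  "(\<lambda>x. curl F x $ 2) = (\<lambda>x. pd 3 (\<lambda>y. F y $ 1) x - pd 1 (\<lambda>y. F y $ 3) x)"
  "(\<lambda>x. curl F x $ 3) = (\<lambda>x. pd 1 (\<lambda>y. F y $ 2) x - pd 2 (\<lambda>y. F y $ 1) x)"
  by (simp_all add: curl_def)

lemma curl_grad: "smooth f \<Longrightarrow> curl (grad f) = (\<lambda>x. 0)"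
  unfolding curl_def grad_component
  by (auto simp: fun_eq_iff vec_eq_iff forall_3
      pd_commute[of f 2 3] pd_commute[of f 3 1] pd_commute[of f 1 2])

lemma dvg_curl:
  assumes "\<And>j. smooth (\<lambda>x. F x $ j)"
  shows "dvg (curl F) = (\<lambda>x. 0)"
  unfolding dvg_def curl_components
  using assms by (simp add: fun_eq_iff pd_diff smooth_pd pd_commute[OF assms])

lemma grad_const_zero: "grad (\<lambda>x. 0) = (\<lambda>x. 0)"
  by (simp add: fun_eq_iff grad_def pd_const_zero vec_eq_iff)

lemma curl_const_zero: "curl (\<lambda>x. 0) = (\<lambda>x. 0)"
  by (simp add: fun_eq_iff curl_def pd_const_zero vec_eq_iff forall_3)

lemma dvg_const_zero: "dvg (\<lambda>x. 0) = (\<lambda>x. 0)"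
  by (simp add: fun_eq_iff dvg_def pd_const_zero)

lemma has_derivative_exp_inner:
  "((\<lambda>x. exp (a \<bullet> x) * c) has_derivative (\<lambda>h. exp (a \<bullet> x) * (a \<bullet> h) * c)) (at x)"
  by (auto intro!: derivative_eq_intros)

lemma pd_exp_inner: "pd i (\<lambda>x. exp (a \<bullet> x) * c) = (\<lambda>x. exp (a \<bullet> x) * (c * a $ i))"
proof
  fix x
  have "frechet_derivative (\<lambda>x. exp (a \<bullet> x) * c) (at x) = (\<lambda>h. exp (a \<bullet> x) * (a \<bullet> h) * c)"
    by (rule frechet_derivative_at[OF has_derivative_exp_inner, symmetric])
  then show "pd i (\<lambda>x. exp (a \<bullet> x) * c) x = exp (a \<bullet> x) * (c * a $ i)"
    by (simp add: pd_def inner_axis)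
qed

lemma smooth_exp_inner: "smooth (\<lambda>x. exp (a \<bullet> x) * c)"
proof -
  have "foldr pd is (\<lambda>x. exp (a \<bullet> x) * c) = (\<lambda>x. exp (a \<bullet> x) * (c * prod_list (map (($) a) is)))"
    for "is"
  proof (induction "is")
    case (Cons i "is")
    then have "foldr pd (i # is) (\<lambda>x. exp (a \<bullet> x) * c)
        = (\<lambda>x. exp (a \<bullet> x) * (c * prod_list (map (($) a) is) * a $ i))"
      by (simp add: pd_exp_inner)
    then show ?case
      by (simp add: mult_ac)
  qed simp
  then show ?thesis
    unfolding smooth_def differentiable_def by (metis has_derivative_exp_inner)
qed

definition scalar_wave :: "real^3 \<Rightarrow> real \<Rightarrow> fld" where
  "scalar_wave a s = Sc (\<lambda>x. exp (a \<bullet> x) * s)"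

definition vector_wave :: "real^3 \<Rightarrow> real^3 \<Rightarrow> fld" where
  "vector_wave a v = Ve (\<lambda>x. exp (a \<bullet> x) *\<^sub>R v)"

lemma in_A_scalar_wave: "in_A (scalar_wave a s)"
  by (simp add: scalar_wave_def smooth_exp_inner)

lemma in_A_vector_wave: "in_A (vector_wave a v)"
  by (simp add: vector_wave_def smooth_exp_inner)

lemma is_vec_wave [simp]: "\<not> is_vec (scalar_wave a s)" "is_vec (vector_wave a v)"
  by (simp_all add: scalar_wave_def vector_wave_def)

lemma nonzero_scalar_wave [simp]: "nonzero (scalar_wave a s) \<longleftrightarrow> s \<noteq> 0"
  by (simp add: scalar_wave_def)

lemma nonzero_vector_wave [simp]: "nonzero (vector_wave a v) \<longleftrightarrow> v \<noteq> 0"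
  by (simp add: vector_wave_def)

lemma nabla_numeral:
  "nabla e 0 (Sc f) = Sc (\<lambda>x. grad f x \<bullet> e)"
  "nabla e 1 (Sc f) = Ve (grad f)"
  "nabla e 2 (Ve F) = Ve (curl F)"
  "nabla e 3 (Ve F) = Sc (dvg F)"
  by (simp_all add: numeral_eq_Suc)

lemma grad_exp_inner: "grad (\<lambda>x. exp (a \<bullet> x) * s) x = exp (a \<bullet> x) *\<^sub>R (s *\<^sub>R a)"
  by (simp add: grad_def pd_exp_inner vec_eq_iff)

lemma nabla_scalar_wave [simp]:
  "nabla e 0 (scalar_wave a s) = scalar_wave a (s * (a \<bullet> e))"
  "nabla e 1 (scalar_wave a s) = vector_wave a (s *\<^sub>R a)"
  by (simp_all add: scalar_wave_def vector_wave_def nabla_numeral grad_exp_inner fun_eq_iff)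

lemma inner_real3: "u \<bullet> v = u $ 1 * v $ 1 + u $ 2 * v $ 2 + u $ 3 * v $ 3" for u v :: "real^3"
  by (simp add: inner_vec_def sum_3)

lemma pd_vector_wave_component:
  "pd i (\<lambda>x. (exp (a \<bullet> x) *\<^sub>R v) $ j) = (\<lambda>x. exp (a \<bullet> x) * (v $ j * a $ i))"
  by (simp add: pd_exp_inner)

lemma nabla_vector_wave [simp]:
  "nabla e 2 (vector_wave a v) = vector_wave a (cross3 a v)"
  "nabla e 3 (vector_wave a v) = scalar_wave a (a \<bullet> v)"
  unfolding scalar_wave_def vector_wave_def nabla_numeral curl_def dvg_def
  by (simp_all only: pd_vector_wave_component)
    (simp_all add: cross3_def fun_eq_iff vec_eq_iff forall_3 inner_real3[of a v] algebra_simps)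

text \<open>The admissible pairs (i, j) other than curl after grad, (1, 2), and div after curl, (2, 3).\<close>

definition nontrivial_pair :: "nat \<Rightarrow> nat \<Rightarrow> bool" where
  "nontrivial_pair i j \<longleftrightarrow> (i \<in> {0, 3} \<and> j \<in> {0, 1}) \<or> (i = 1 \<and> j = 3) \<or> (i = 2 \<and> j = 2)"

definition walks :: "nat \<Rightarrow> nat \<Rightarrow> nat list set" where
  "walks n i = {xs. length xs = n \<and> successively nontrivial_pair (i # xs)}"

lemma walks_0: "walks 0 i = {[]}"
  by (auto simp: walks_def)

lemma walks_Suc:
  "walks (Suc n) i = (\<lambda>(j, xs). j # xs) ` (SIGMA j:{j. nontrivial_pair i j}. walks n j)"
  by (auto simp: walks_def length_Suc_conv)

lemma finite_successors: "finite {j. nontrivial_pair i j}"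
  by (rule finite_subset[of _ "{0..3}"]) (auto simp: nontrivial_pair_def)

lemma finite_walks: "finite (walks n i)"
  by (induction n arbitrary: i) (simp_all add: walks_0 walks_Suc finite_successors)

lemma card_walks_Suc: "card (walks (Suc n) i) = (\<Sum>j | nontrivial_pair i j. card (walks n j))"
  unfolding walks_Suc
  by (subst card_image) (auto simp: inj_on_def finite_successors finite_walks)

lemma card_walks:
  "card (walks n 0) = fib (n + 2) \<and> card (walks n 3) = fib (n + 2) \<and>
   card (walks n 1) = fib (n + 1) \<and> card (walks n 2) = 1"
proof (induction n)
  case 0
  then show ?case by (simp add: walks_0)
next
  case (Suc n)
  have "{j. nontrivial_pair 0 j} = {0, 1}" "{j. nontrivial_pair 3 j} = {0, 1}"
    "{j. nontrivial_pair 1 j} = {3}" "{j. nontrivial_pair 2 j} = {2}"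
    by (auto simp: nontrivial_pair_def)
  with Suc show ?case
    by (simp add: card_walks_Suc)
qed

lemma successively_nontrivial_pair_range:
  "successively nontrivial_pair (i # xs) \<Longrightarrow> set xs \<subseteq> {0..3}"
  by (induction xs arbitrary: i) (auto simp: nontrivial_pair_def)

lemma card_nontrivial_pair_words:
  "card {xs. length xs = Suc n \<and> set xs \<subseteq> {0..3} \<and> successively nontrivial_pair xs}
     = fib (n + 4) + 1"
proof -
  have "{xs. length xs = Suc n \<and> set xs \<subseteq> {0..3} \<and> successively nontrivial_pair xs}
      = (\<lambda>(i, xs). i # xs) ` (SIGMA i:{0..3}. walks n i)"
    using successively_nontrivial_pair_range by (fastforce simp: walks_def length_Suc_conv)
  then have "card {xs. length xs = Suc n \<and> set xs \<subseteq> {0..3} \<and> successively nontrivial_pair xs}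
      = card (SIGMA i:{0..3}. walks n i)"
    by (simp add: card_image inj_on_def)
  also have "\<dots> = (\<Sum>i\<in>{0, 1, 2, 3}. card (walks n i))"
    by (simp add: finite_walks atLeast0AtMost numeral_eq_Suc atMost_Suc)
  also have "\<dots> = fib (n + 4) + 1"
    using card_walks[of n] by (simp add: numeral_eq_Suc)
  finally show ?thesis .
qed

lemma successively_iff_nth:
  "successively P xs \<longleftrightarrow> (\<forall>j. Suc j < length xs \<longrightarrow> P (xs ! j) (xs ! Suc j))"
  by (induction P xs rule: successively.induct) (auto simp: nth_Cons split: nat.split)

lemma admissible_iff_successively:
  "admissible xs \<longleftrightarrow> set xs \<subseteq> {0..3} \<and> successively (\<lambda>i j. cod_vec i = dom_vec j) xs"
  by (simp add: admissible_def successively_iff_nth)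

lemma compose_Nil [simp]: "compose e [] g = g"
  by (simp add: compose_def)

lemma compose_Cons [simp]: "compose e (i # xs) g = compose e xs (nabla e i g)"
  by (simp add: compose_def)

lemma dir_as_pd: "(\<lambda>x. grad f x \<bullet> e) = (\<lambda>x. e $ 1 * pd 1 f x + e $ 2 * pd 2 f x + e $ 3 * pd 3 f x)"
  by (simp add: fun_eq_iff inner_real3 grad_def mult.commute)

lemma nabla_in_A:
  assumes "i \<le> 3" and "in_A g" and "is_vec g = dom_vec i"
  shows "in_A (nabla e i g) \<and> is_vec (nabla e i g) = cod_vec i"
proof (cases g)
  case (Sc f)
  with assms have "smooth f" and "i = 0 \<or> i = 1"
    by (auto simp: dom_vec_def)
  then show ?thesis
    using Sc by (auto simp: nabla_numeral dir_as_pd grad_component cod_vec_def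
        smooth_add smooth_cmult smooth_pd)
next
  case (Ve F)
  with assms have "\<And>j. smooth (\<lambda>x. F x $ j)" and "i = 2 \<or> i = 3"
    by (auto simp: dom_vec_def)
  then show ?thesis
    using Ve by (auto simp: nabla_numeral curl_components dvg_def[abs_def] forall_3 cod_vec_def
        smooth_add smooth_diff smooth_pd)
qed

lemma nabla_beyond_3:
  assumes "3 < i"
  shows "nabla e i g = g"
proof -
  define m where "m = i - 4"
  then have "i = Suc (Suc (Suc (Suc m)))"
    using assms by arith
  then show ?thesis
    by (cases g) simp_all
qed

lemma not_nonzero_nabla:
  assumes "\<not> nonzero g"
  shows "\<not> nonzero (nabla e i g)"
proof -
  have "g = Sc (\<lambda>x. 0) \<or> g = Ve (\<lambda>x. 0)"
    using assms by (cases g) (auto simp: fun_eq_iff)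
  moreover have "i \<in> {0, 1, 2, 3} \<or> 3 < i"
    by auto
  ultimately show ?thesis
    by (auto simp: numeral_eq_Suc grad_const_zero curl_const_zero dvg_const_zero nabla_beyond_3)
qed

lemma not_nonzero_compose: "\<not> nonzero g \<Longrightarrow> \<not> nonzero (compose e xs g)"
  by (induction xs arbitrary: g) (simp_all add: not_nonzero_nabla)

lemma nabla_nabla_trivial:
  assumes "cod_vec i = dom_vec j" and "i \<le> 3" and "j \<le> 3" and "\<not> nontrivial_pair i j"
    and "in_A g" and "is_vec g = dom_vec i"
  shows "\<not> nonzero (nabla e j (nabla e i g))"
proof -
  have "i \<in> {0, 1, 2, 3}" "j \<in> {0, 1, 2, 3}"
    using assms(2,3) by auto
  then have "(i = 1 \<and> j = 2) \<or> (i = 2 \<and> j = 3)"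
    using assms(1,4) unfolding nontrivial_pair_def cod_vec_def dom_vec_def by auto
  then show ?thesis
  proof
    assume "i = 1 \<and> j = 2"
    with assms(5,6) obtain f where "g = Sc f" and "smooth f"
      by (cases g) (auto simp: dom_vec_def)
    then show ?thesis
      using \<open>i = 1 \<and> j = 2\<close> by (simp add: nabla_numeral curl_grad)
  next
    assume "i = 2 \<and> j = 3"
    with assms(5,6) obtain F where "g = Ve F" and "\<And>j. smooth (\<lambda>x. F x $ j)"
      by (cases g) (auto simp: dom_vec_def)
    then show ?thesis
      using \<open>i = 2 \<and> j = 3\<close> by (simp add: nabla_numeral dvg_curl)
  qed
qed

lemma compose_trivial:
  assumes "admissible xs" and "\<not> successively nontrivial_pair xs"
    and "in_A g" and "is_vec g = dom_vec (hd xs)"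
  shows "\<not> nonzero (compose e xs g)"
  using assms
proof (induction xs arbitrary: g rule: induct_list012)
  case (3 i j xs)
  then have "i \<le> 3" "j \<le> 3" "cod_vec i = dom_vec j" "admissible (j # xs)"
    by (auto simp: admissible_iff_successively)
  show ?case
  proof (cases "nontrivial_pair i j")
    case True
    with "3.prems"(2) have "\<not> successively nontrivial_pair (j # xs)"
      by simp
    moreover have "in_A (nabla e i g) \<and> is_vec (nabla e i g) = dom_vec j"
      using nabla_in_A[OF \<open>i \<le> 3\<close> "3.prems"(3)] "3.prems"(4) \<open>cod_vec i = dom_vec j\<close> by simp
    ultimately show ?thesis
      using "3.IH"(2) \<open>admissible (j # xs)\<close> by simp
  next
    case False
    then show ?thesis
      using nabla_nabla_trivial[OF \<open>cod_vec i = dom_vec j\<close> \<open>i \<le> 3\<close> \<open>j \<le> 3\<close> _ "3.prems"(3)]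
        "3.prems"(4) by (simp add: not_nonzero_compose)
  qed
qed simp_all

lemma cross3_cross3_nonzero:
  assumes "cross3 a v \<noteq> 0"
  shows "cross3 a (cross3 a v) \<noteq> 0"
proof -
  have "a \<noteq> 0"
    using assms by auto
  have "(norm (cross3 a (cross3 a v)))\<^sup>2 = (norm a)\<^sup>2 * (norm (cross3 a v))\<^sup>2"
    using norm_cross[of a "cross3 a v"] dot_cross_self(1)[of a v] by simp
  then show ?thesis
    using assms \<open>a \<noteq> 0\<close> by auto
qed

definition surviving_wave :: "real^3 \<Rightarrow> nat \<Rightarrow> fld \<Rightarrow> bool" where
  "surviving_wave e i g \<longleftrightarrow>
     g \<in> range (scalar_wave e) \<union> range (vector_wave e) \<and> is_vec g = dom_vec i \<and> nonzero (nabla e i g)"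

lemma surviving_wave_nabla:
  assumes "norm e = 1" and "nontrivial_pair i j" and "surviving_wave e i g"
  shows "surviving_wave e j (nabla e i g)"
proof -
  have "e \<bullet> e = 1" "e \<noteq> 0"
    using assms(1) norm_eq_1 by auto
  with assms(2,3) show ?thesis
    unfolding surviving_wave_def nontrivial_pair_def
    by (auto simp: dom_vec_def cross3_cross3_nonzero nabla_scalar_wave(2)[unfolded One_nat_def])
qed

lemma surviving_wave_compose:
  assumes "norm e = 1" and "successively nontrivial_pair (i # xs)" and "surviving_wave e i g"
  shows "nonzero (compose e (i # xs) g)"
  using assms(2,3)
proof (induction xs arbitrary: i g)
  case Nil
  then show ?case by (simp add: surviving_wave_def)
next
  case (Cons j xs)
  then have "nonzero (compose e (j # xs) (nabla e i g))"
    using surviving_wave_nabla[OF assms(1)] by simp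
  then show ?case by simp
qed

lemma surviving_wave_in_A: "surviving_wave e i g \<Longrightarrow> in_A g"
  by (auto simp: surviving_wave_def in_A_scalar_wave in_A_vector_wave)

lemma surviving_wave_exists:
  assumes "norm e = 1" and "i \<le> 3"
  shows "\<exists>g. surviving_wave e i g"
proof -
  have "e \<bullet> e = 1" "e \<noteq> 0"
    using assms(1) norm_eq_1 by auto
  then obtain w where "cross3 e w \<noteq> 0"
    using cross_basis_nonzero by blast
  have "i \<in> {0, 1, 2, 3}"
    using assms(2) by auto
  then have "surviving_wave e i (if i \<le> 1 then scalar_wave e 1 else if i = 2 then vector_wave e w
      else vector_wave e e)"
    using \<open>e \<bullet> e = 1\<close> \<open>e \<noteq> 0\<close> \<open>cross3 e w \<noteq> 0\<close>
    by (auto simp: surviving_wave_def dom_vec_def nabla_scalar_wave(2)[unfolded One_nat_def])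
  then show ?thesis ..
qed

lemma admissible_nontrivial_iff:
  assumes "norm e = 1" and "xs \<noteq> []"
  shows "admissible xs \<and> nontrivial e xs \<longleftrightarrow> set xs \<subseteq> {0..3} \<and> successively nontrivial_pair xs"
proof
  assume "admissible xs \<and> nontrivial e xs"
  then show "set xs \<subseteq> {0..3} \<and> successively nontrivial_pair xs"
    using compose_trivial unfolding nontrivial_def admissible_iff_successively by blast
next
  assume *: "set xs \<subseteq> {0..3} \<and> successively nontrivial_pair xs"
  then have "successively (\<lambda>i j. cod_vec i = dom_vec j) xs"
    by (rule successively_mono[OF conjunct2])
      (auto simp: nontrivial_pair_def cod_vec_def dom_vec_def)
  then have "admissible xs"
    using * by (simp add: admissible_iff_successively)
  moreover obtain i ys where "xs = i # ys"
    using assms(2) by (cases xs) auto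
  moreover obtain g where g: "surviving_wave e i g"
    using surviving_wave_exists[OF assms(1)] * \<open>xs = i # ys\<close> by auto
  moreover have "nonzero (compose e (i # ys) g)"
    using surviving_wave_compose[OF assms(1) _ g] * \<open>xs = i # ys\<close> by blast
  ultimately show "admissible xs \<and> nontrivial e xs"
    using surviving_wave_in_A[OF g] unfolding nontrivial_def surviving_wave_def by auto
qed

theorem corollary1:
  fixes e :: "real^3" and k :: nat
  assumes "norm e = 1" and "k \<ge> 1"
  shows "card {is :: nat list. length is = k \<and> admissible is \<and> nontrivial e is}
           = fib (k + 3) + 1"
proof -
  obtain n where "k = Suc n"
    using assms(2) by (cases k) auto
  have "admissible xs \<and> nontrivial e xs \<longleftrightarrow> set xs \<subseteq> {0..3} \<and> successively nontrivial_pair xs"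
    if "length xs = Suc n" for xs
    using that by (intro admissible_nontrivial_iff[OF assms(1)]) auto
  with \<open>k = Suc n\<close> have "{is :: nat list. length is = k \<and> admissible is \<and> nontrivial e is}
      = {xs. length xs = Suc n \<and> set xs \<subseteq> {0..3} \<and> successively nontrivial_pair xs}"
    by blast
  then show ?thesis
    using card_nontrivial_pair_words[of n] \<open>k = Suc n\<close> by (simp add: ac_simps)
qed

end
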